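(* Let $\Delta$ be a nonempty $\Gamma$-semimodule. Then its dual satisfies $\Delta^*=(2\delta-1)-(\mathbb{Z}\setminus\Delta)=\{2\delta-1-x: x\in\mathbb{Z}\setminus\Delta\}$.
   Context: Let $m,n$ be coprime positive integers, $\Gamma=\{am+bn:a,b\in\mathbb{Z}_{\ge0}\}$ and $\delta=\frac{(m-1)(n-1)}2$. A $\Gamma$-semimodule is a subset $\Delta\subset\mathbb{Z}_{\ge0}$ with $\Delta+\Gamma\subset\Delta$. The dual semimodule is $\Delta^*=\{\varphi\in\mathbb{Z}:\varphi+\Delta\subset\Gamma\}$. *)

theory Defs
  imports Main
begin

definition numsemigroup :: "int \<Rightarrow> int \<Rightarrow> int set" where
  "numsemigroup m n = {a * m + b * n | a b :: int. a \<ge> 0 \<and> b \<ge> 0}"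

definition delta :: "int \<Rightarrow> int \<Rightarrow> int" where
  "delta m n = ((m - 1) * (n - 1)) div 2"

definition is_semimodule :: "int \<Rightarrow> int \<Rightarrow> int set \<Rightarrow> bool" where
  "is_semimodule m n D \<longleftrightarrow> D \<subseteq> {0..} \<and>
     (\<forall>x\<in>D. \<forall>g\<in>numsemigroup m n. x + g \<in> D)"

definition dual_semimodule :: "int \<Rightarrow> int \<Rightarrow> int set \<Rightarrow> int set" where
  "dual_semimodule m n D = {phi. \<forall>x\<in>D. phi + x \<in> numsemigroup m n}"

end

theory Submission
  imports Defs
begin

text \<open>With \<open>c = 2\<delta> - 1 = mn - m - n\<close> (the Frobenius number), the numerical semigroup is
  symmetric: exactly one of \<open>z\<close> and \<open>c - z\<close> lies in \<open>\<Gamma>\<close>. Consequently \<open>\<phi> \<in> \<Delta>*\<close> iff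
  \<open>c - \<phi> \<notin> \<Delta>\<close>: if \<open>c - \<phi> \<in> \<Delta>\<close> then \<open>\<phi> + (c - \<phi>) = c \<notin> \<Gamma>\<close>; conversely, if
  \<open>\<phi> + x \<notin> \<Gamma>\<close> for some \<open>x \<in> \<Delta>\<close>, then \<open>c - \<phi> - x \<in> \<Gamma>\<close> and closure of \<open>\<Delta>\<close> gives
  \<open>c - \<phi> \<in> \<Delta>\<close>.\<close>

lemma twice_delta_minus_one:
  fixes m n :: int
  assumes "coprime m n"
  shows "2 * delta m n - 1 = m * n - m - n"
proof -
  have "\<not> (even m \<and> even n)" using assms
    by (metis coprime_common_divisor dvd_refl odd_one)
  hence "even ((m - 1) * (n - 1))" by auto
  thus ?thesis unfolding delta_def by (auto simp: algebra_simps elim!: evenE)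
qed

lemma zero_mem_numsemigroup: "0 \<in> numsemigroup m n"
  unfolding numsemigroup_def by force

lemma positive_combination_neq_product:
  fixes m n A B :: int
  assumes "m > 0" "n > 0" "coprime m n" "A > 0" "B > 0"
  shows "A * m + B * n \<noteq> m * n"
proof
  assume eq: "A * m + B * n = m * n"
  have "m dvd B * n" using eq by (metis dvd_add_right_iff dvd_triv_left dvd_triv_right)
  hence "m dvd B" using assms(3) by (simp add: coprime_dvd_mult_left_iff)
  hence "B \<ge> m" using \<open>B > 0\<close> by (simp add: zdvd_imp_le)
  have "n dvd A * m" using eq by (metis dvd_add_left_iff dvd_triv_left dvd_triv_right)
  hence "n dvd A" using assms(3) by (simp add: coprime_dvd_mult_left_iff coprime_commute)
  hence "A \<ge> n" using \<open>A > 0\<close> by (simp add: zdvd_imp_le)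
  have "A * m \<ge> m * n" "B * n \<ge> m * n" "m * n > 0"
    using \<open>A \<ge> n\<close> \<open>B \<ge> m\<close> assms(1,2) by (simp_all add: mult.commute)
  with eq show False by linarith
qed

lemma not_mem_numsemigroup_complement:
  fixes m n z :: int
  assumes "m > 0" "n > 0" "coprime m n" "z \<in> numsemigroup m n"
  shows "m * n - m - n - z \<notin> numsemigroup m n"
proof
  assume "m * n - m - n - z \<in> numsemigroup m n"
  then obtain c d where cd: "m * n - m - n - z = c * m + d * n" "c \<ge> 0" "d \<ge> 0"
    unfolding numsemigroup_def by auto
  obtain a b where ab: "z = a * m + b * n" "a \<ge> 0" "b \<ge> 0"
    using assms(4) unfolding numsemigroup_def by auto
  have "(a + c + 1) * m + (b + d + 1) * n = m * n"
    using ab cd by (simp add: algebra_simps)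
  with positive_combination_neq_product[OF assms(1-3)] ab cd show False by simp
qed

lemma mem_numsemigroup_or_complement:
  fixes m n z :: int
  assumes "n > 0" "coprime m n"
  shows "z \<in> numsemigroup m n \<or> m * n - m - n - z \<in> numsemigroup m n"
proof -
  obtain u v where uv: "u * m + v * n = 1" using bezout_int[of m n] assms(2) by auto
  \<comment> \<open>the representation \<open>z = a m + b n\<close> with \<open>0 \<le> a < n\<close>; the sign of \<open>b\<close> decides\<close>
  define a where "a = (z * u) mod n"
  define b where "b = z * v + (z * u div n) * m"
  have z: "z = a * m + b * n"
  proof -
    have "z = (z * u) * m + (z * v) * n" using uv by (metis mult.right_neutral distrib_left mult.assoc)
    also have "z * u = a + (z * u div n) * n" unfolding a_def by simp
    finally show ?thesis unfolding b_def by (simp add: algebra_simps)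
  qed
  have a: "0 \<le> a" "a < n" unfolding a_def using assms by auto
  show ?thesis
  proof (cases "b \<ge> 0")
    case True
    thus ?thesis using z a unfolding numsemigroup_def by blast
  next
    case False
    have "m * n - m - n - z = (n - 1 - a) * m + (- b - 1) * n" using z by (simp add: algebra_simps)
    moreover have "n - 1 - a \<ge> 0" "- b - 1 \<ge> 0" using a False by auto
    ultimately show ?thesis unfolding numsemigroup_def by blast
  qed
qed

lemma mem_dual_semimodule_iff:
  fixes m n phi :: int
  assumes "m > 0" "n > 0" "coprime m n" "is_semimodule m n D"
  shows "phi \<in> dual_semimodule m n D \<longleftrightarrow> m * n - m - n - phi \<notin> D"
proof
  assume dual: "phi \<in> dual_semimodule m n D"
  have "m * n - m - n \<notin> numsemigroup m n"
    using not_mem_numsemigroup_complement[OF assms(1-3) zero_mem_numsemigroup] by simp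
  show "m * n - m - n - phi \<notin> D"
  proof
    assume "m * n - m - n - phi \<in> D"
    with dual have "phi + (m * n - m - n - phi) \<in> numsemigroup m n"
      unfolding dual_semimodule_def by blast
    hence "m * n - m - n \<in> numsemigroup m n" by (simp add: algebra_simps)
    with \<open>m * n - m - n \<notin> numsemigroup m n\<close> show False by contradiction
  qed
next
  assume not_mem: "m * n - m - n - phi \<notin> D"
  show "phi \<in> dual_semimodule m n D" unfolding dual_semimodule_def
  proof (intro CollectI ballI, rule ccontr)
    fix x assume "x \<in> D" "phi + x \<notin> numsemigroup m n"
    hence "m * n - m - n - (phi + x) \<in> numsemigroup m n"
      using mem_numsemigroup_or_complement[OF assms(2,3), of "phi + x"] by simp
    with \<open>x \<in> D\<close> assms(4) have "x + (m * n - m - n - (phi + x)) \<in> D"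
      unfolding is_semimodule_def by blast
    with not_mem show False by (simp add: algebra_simps)
  qed
qed

text \<open>Neither nonemptiness of \<open>\<Delta>\<close> nor \<open>\<Delta> \<subseteq> {0..}\<close> is needed: for \<open>\<Delta> = {}\<close> both sides are \<open>\<int>\<close>.\<close>

theorem mainTheorem9:
  fixes m n :: int and D :: "int set"
  assumes "m > 0" and "n > 0" and "coprime m n"
    and "is_semimodule m n D" and "D \<noteq> {}"
  shows "dual_semimodule m n D = {2 * delta m n - 1 - x | x. x \<notin> D}"
proof -
  have "phi \<in> dual_semimodule m n D \<longleftrightarrow> phi \<in> {m * n - m - n - x | x. x \<notin> D}" for phi
    using mem_dual_semimodule_iff[OF assms(1-4)]
    by (auto intro!: exI[of _ "m * n - m - n - phi"])
  thus ?thesis unfolding twice_delta_minus_one[OF assms(3)] by blast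
qed

end
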